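(* Let $X$ and $Y$ be random variables taking values in the non-negative integers with zero-inflated marginal cdfs $F(s)=(1-\pi_F)+\pi_F\bar F(s)$ and $G(t)=(1-\pi_G)+\pi_G\bar G(t)$ for $s,t\ge0$ (zero for negative arguments), where $\bar F,\bar G$ are discrete distribution functions. Let $p_1=\mathbb{P}[X=0]=F(0)$ and $p_2=\mathbb{P}[Y=0]=G(0)$. For a joint distribution $H$ of $(X,Y)$ with these marginals, let $\tau_A$ denote Kendall's $\tau$ of $(X,Y)$, i.e. $\tau_A=\mathbb{P}[(\tilde X_1-\tilde X_2)(\tilde Y_1-\tilde Y_2)>0]-\mathbb{P}[(\tilde X_1-\tilde X_2)(\tilde Y_1-\tilde Y_2)<0]$ for two independent copies $(\tilde X_1,\tilde Y_1),(\tilde X_2,\tilde Y_2)$ of $(X,Y)$. Let $\tilde s$ be a point with $F(\tilde s)>p_2$ and $F(\tilde s-1)\le p_2$; $\tilde t$ a point with $G(\tilde t)>p_1$ and $G(\tilde t-1)\le p_1$; $\tilde s'$ a point with $F(\tilde s')+p_2-1>0$ and $F(\tilde s'-1)+p_2-1\le 0$; $\tilde t'$ a point with $G(\tilde t')+p_1-1>0$ and $G(\tilde t'-1)+p_1-1\le0$. Let $p^U_{t_{11}}$ (resp. $p^L_{t_{11}}$) be the probability that, for two independent copies of $(X,Y)$ conditioned on $\{X>0,Y>0\}$, the $X$-components or the $Y$-components are tied, when $H$ is the upper Fréchet–Hoeffding bound $H(x,y)=\min\{F(x),G(y)\}$ (resp. the lower Fréchet–Hoeffding bound $H(x,y)=\max\{F(x)+G(y)-1,0\}$).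 Then, over joint distributions $H$ with marginals $F$ and $G$, the upper and lower bounds of $\tau_A$ are $$\tau_A^{upper}=\begin{cases}(1-p_2^2)-(1-p_2)^2p^U_{t_{11}}-2(p_2-F(\tilde s-1))(F(\tilde s)-p_2), & p_1\le p_2,\\ (1-p_1^2)-(1-p_1)^2p^U_{t_{11}}-2(p_1-G(\tilde t-1))(G(\tilde t)-p_1), & p_1\ge p_2,\end{cases}$$ $$\tau_A^{lower}=\begin{cases}-2(1-p_1)(1-p_2), & 1-p_1-p_2<0,\\ p_1^2+p_2^2-1+(1-p_1-p_2)^2p^L_{t_{11}}+2\big[(F(\tilde s')+p_2-1)(1-p_2-F(\tilde s'-1))+(G(\tilde t')+p_1-1)(1-p_1-G(\tilde t'-1))\big], & 1-p_1-p_2>0.\end{cases}$$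
   Context: The upper Fréchet–Hoeffding bound $\min\{F(x),G(y)\}$ and lower bound $\max\{F(x)+G(y)-1,0\}$ are the pointwise maximal and minimal joint cdfs with marginals $F$ and $G$. *)

theory Defs
  imports "HOL-Probability.Probability"
begin

text \<open>Joint distributions of (X,Y) on the non-negative integers are modelled as pmfs on nat \<times> nat.
  Cdfs are functions on the integers (so that F(s-1) makes sense at s = 0, with value 0).\<close>

definition joint_cdf :: "(nat \<times> nat) pmf \<Rightarrow> int \<Rightarrow> int \<Rightarrow> real" where
  "joint_cdf H x y = measure_pmf.prob H {(a, b). int a \<le> x \<and> int b \<le> y}"

definition nat_cdf :: "nat pmf \<Rightarrow> int \<Rightarrow> real" where
  "nat_cdf P s = measure_pmf.prob P {n. int n \<le> s}"

definition couplings :: "(int \<Rightarrow> real) \<Rightarrow> (int \<Rightarrow> real) \<Rightarrow> (nat \<times> nat) pmf set" where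
  "couplings F G = {H. (\<forall>s. measure_pmf.prob H {(a, b). int a \<le> s} = F s) \<and>
                       (\<forall>t. measure_pmf.prob H {(a, b). int b \<le> t} = G t)}"

definition pmf_of_joint_cdf :: "(int \<Rightarrow> int \<Rightarrow> real) \<Rightarrow> (nat \<times> nat) pmf" where
  "pmf_of_joint_cdf C = embed_pmf (\<lambda>(a, b).
      C (int a) (int b) - C (int a - 1) (int b) - C (int a) (int b - 1) + C (int a - 1) (int b - 1))"

definition FH_upper :: "(int \<Rightarrow> real) \<Rightarrow> (int \<Rightarrow> real) \<Rightarrow> (nat \<times> nat) pmf" where
  "FH_upper F G = pmf_of_joint_cdf (\<lambda>x y. min (F x) (G y))"

definition FH_lower :: "(int \<Rightarrow> real) \<Rightarrow> (int \<Rightarrow> real) \<Rightarrow> (nat \<times> nat) pmf" where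
  "FH_lower F G = pmf_of_joint_cdf (\<lambda>x y. max (F x + G y - 1) 0)"

definition kendall_tau :: "(nat \<times> nat) pmf \<Rightarrow> real" where
  "kendall_tau H =
     measure_pmf.prob (pair_pmf H H)
       {((x1, y1), (x2, y2)). (int x1 - int x2) * (int y1 - int y2) > 0}
   - measure_pmf.prob (pair_pmf H H)
       {((x1, y1), (x2, y2)). (int x1 - int x2) * (int y1 - int y2) < 0}"

definition tie_prob_11 :: "(nat \<times> nat) pmf \<Rightarrow> real" where
  "tie_prob_11 H =
     (let Q = cond_pmf H {(a, b). a > 0 \<and> b > 0} in
      measure_pmf.prob (pair_pmf Q Q) {((x1, y1), (x2, y2)). x1 = x2 \<or> y1 = y2})"

end

theory Submission
  imports Defs
begin

text \<open>
  For U uniform on (0,1) and the quantile functions F^-1, G^-1 of the marginals, the pairs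
  (F^-1 U, G^-1 U) and (F^-1 U, G^-1 (1 - U)) have the joint cdfs min (F x) (G y) and
  max (F x + G y - 1) 0. So both Frechet-Hoeffding bounds are couplings, and the joint cdf of
  every coupling lies between them.

  Kendall's tau is Q(H, H) for the concordance function Q(H, K) = E sgn (X - X') sgn (Y - Y'),
  where (X, Y) ~ H and (X', Y') ~ K are independent. Q is symmetric, and for fixed marginals
  Q(H, K) is an increasing affine function of the joint cdf of K. Hence
  tau H = Q(H, H) <= Q(H, K) = Q(K, H) <= Q(K, K) = tau K whenever the joint cdf of H lies below
  that of K: the supremum of tau is attained at the upper bound, the infimum at the lower one.

  The upper bound is supported on a chain, so it has no discordant pairs and tau = 1 - P(tie);
  the lower bound is supported on an antichain, so tau = - P(discordant) = P(tie) - 1. The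
  probabilities are computed by splitting the support according to which coordinates vanish.
  Inside the quadrant X, Y > 0 the tie probability is tie_prob_11 times the squared mass of the
  quadrant; between two different parts the monotone structure of the support allows a tie only
  at the level s~ (resp. s~', t~'), which gives the product terms. The case p1 >= p2 of the upper
  bound follows from the case p1 <= p2 by exchanging X and Y.
\<close>

lemma expectation_bind_pmf:
  fixes f :: "'b \<Rightarrow> real"
  assumes "\<And>z. \<bar>f z\<bar> \<le> B"
  shows "measure_pmf.expectation (bind_pmf M N) f = (\<integral>x. measure_pmf.expectation (N x) f \<partial>M)"
  unfolding measure_pmf_bind
  by (subst integral_bind[where K="count_space UNIV" and B=B and B'=1])
     (use assms in \<open>auto intro!: measure_pmf.finite_measure
        simp: measure_pmf.emeasure_space_1 measure_pmf_in_subprob_algebra\<close>)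

lemma expectation_pair_pmf:
  fixes f :: "'a \<times> 'b \<Rightarrow> real"
  assumes "\<And>z. \<bar>f z\<bar> \<le> B"
  shows "measure_pmf.expectation (pair_pmf p q) f = (\<integral>a. (\<integral>b. f (a, b) \<partial>q) \<partial>p)"
  unfolding pair_pmf_def using assms by (simp add: expectation_bind_pmf[where B=B])

lemma measure_pair_pmf_times:
  fixes p :: "'a::countable pmf" and q :: "'b::countable pmf"
  shows "measure_pmf.prob (pair_pmf p q) (A \<times> B) = measure_pmf.prob p A * measure_pmf.prob q B"
  by (rule measure_pmf_prob_product) (rule countableI_type)+

lemma measure_cond_pmf:
  assumes "set_pmf p \<inter> S \<noteq> {}"
  shows "measure_pmf.prob (cond_pmf p S) A = measure_pmf.prob p (A \<inter> S) / measure_pmf.prob p S"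
  using assms by (simp add: cond_pmf.rep_eq emeasure_measure_pmf_not_zero Int_commute)

lemma measure_pair_cond_pmf:
  fixes p :: "'a::countable pmf" and q :: "'b::countable pmf"
  assumes A: "set_pmf p \<inter> A \<noteq> {}" and B: "set_pmf q \<inter> B \<noteq> {}"
  shows "measure_pmf.prob (pair_pmf (cond_pmf p A) (cond_pmf q B)) T =
         measure_pmf.prob (pair_pmf p q) (T \<inter> A \<times> B) / (measure_pmf.prob p A * measure_pmf.prob q B)"
proof -
  have AB: "set_pmf (pair_pmf p q) \<inter> A \<times> B \<noteq> {}" using A B by auto
  have "pair_pmf (cond_pmf p A) (cond_pmf q B) = cond_pmf (pair_pmf p q) (A \<times> B)"
  proof (rule pmf_eqI)
    fix x :: "'a \<times> 'b"
    show "pmf (pair_pmf (cond_pmf p A) (cond_pmf q B)) x = pmf (cond_pmf (pair_pmf p q) (A \<times> B)) x"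
      by (cases x) (simp add: pmf_pair pmf_cond[OF A] pmf_cond[OF B] pmf_cond[OF AB] measure_pair_pmf_times)
  qed
  then show ?thesis by (simp add: measure_cond_pmf[OF AB] measure_pair_pmf_times)
qed

lemma measure_pair_pmf_eq_times_on_support:
  fixes p :: "'a::countable pmf" and q :: "'b::countable pmf"
  assumes "\<And>x y. x \<in> set_pmf p \<Longrightarrow> y \<in> set_pmf q \<Longrightarrow> (x, y) \<in> T \<longleftrightarrow> x \<in> A \<and> y \<in> B"
  shows "measure_pmf.prob (pair_pmf p q) T = measure_pmf.prob p A * measure_pmf.prob q B"
proof -
  have "T \<inter> set_pmf (pair_pmf p q) = (A \<inter> set_pmf p) \<times> (B \<inter> set_pmf q)"
    using assms by auto
  then show ?thesis
    by (metis measure_Int_set_pmf measure_pair_pmf_times)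
qed

lemma measure_pair_pmf_blocks:
  assumes "finite \<R>" "disjoint \<R>" "set_pmf p \<subseteq> \<Union>\<R>" "set_pmf q \<subseteq> \<Union>\<R>"
  shows "measure_pmf.prob (pair_pmf p q) T =
         (\<Sum>A\<in>\<R>. \<Sum>B\<in>\<R>. measure_pmf.prob (pair_pmf p q) (T \<inter> A \<times> B))"
proof -
  let ?block = "\<lambda>(A, B). T \<inter> A \<times> B"
  have "T \<inter> set_pmf (pair_pmf p q) = (\<Union>AB\<in>\<R> \<times> \<R>. ?block AB) \<inter> set_pmf (pair_pmf p q)"
  proof (intro equalityI subsetI)
    fix x assume x: "x \<in> T \<inter> set_pmf (pair_pmf p q)"
    then have "fst x \<in> \<Union>\<R>" "snd x \<in> \<Union>\<R>"
      using assms(3,4) by (auto simp: mem_Times_iff)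
    then obtain A B where "A \<in> \<R>" "B \<in> \<R>" "fst x \<in> A" "snd x \<in> B"
      by blast
    with x show "x \<in> (\<Union>AB\<in>\<R> \<times> \<R>. ?block AB) \<inter> set_pmf (pair_pmf p q)"
      by (cases x) auto
  qed auto
  then have "measure_pmf.prob (pair_pmf p q) T = measure_pmf.prob (pair_pmf p q) (\<Union>AB\<in>\<R> \<times> \<R>. ?block AB)"
    using measure_Int_set_pmf by metis
  also have "\<dots> = (\<Sum>AB\<in>\<R> \<times> \<R>. measure_pmf.prob (pair_pmf p q) (?block AB))"
  proof (rule measure_pmf.finite_measure_finite_Union)
    show "disjoint_family_on ?block (\<R> \<times> \<R>)"
      unfolding disjoint_family_on_def
    proof (intro ballI impI)
      fix AB AB' assume "AB \<in> \<R> \<times> \<R>" "AB' \<in> \<R> \<times> \<R>" "AB \<noteq> AB'"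
      then obtain A B A' B' where "AB = (A, B)" "AB' = (A', B')" "A \<in> \<R>" "B \<in> \<R>" "A' \<in> \<R>" "B' \<in> \<R>"
        "A \<noteq> A' \<or> B \<noteq> B'" by auto
      then show "?block AB \<inter> ?block AB' = {}"
        by (auto dest: disjointD[OF assms(2)])
    qed
  qed (use assms(1) in auto)
  finally show ?thesis
    by (simp only: sum.cartesian_product split_def)
qed

definition concordant_pairs :: "((nat \<times> nat) \<times> (nat \<times> nat)) set" where
  "concordant_pairs = {((x1, y1), (x2, y2)). (int x1 - int x2) * (int y1 - int y2) > 0}"

definition discordant_pairs :: "((nat \<times> nat) \<times> (nat \<times> nat)) set" where
  "discordant_pairs = {((x1, y1), (x2, y2)). (int x1 - int x2) * (int y1 - int y2) < 0}"

definition tied_pairs :: "((nat \<times> nat) \<times> (nat \<times> nat)) set" where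
  "tied_pairs = {((x1, y1), (x2, y2)). x1 = x2 \<or> y1 = y2}"

lemma kendall_tau_eq_measure:
  "kendall_tau H = measure_pmf.prob (pair_pmf H H) concordant_pairs
                 - measure_pmf.prob (pair_pmf H H) discordant_pairs"
  unfolding kendall_tau_def concordant_pairs_def discordant_pairs_def ..

lemma tie_prob_11_eq_measure:
  "tie_prob_11 H = measure_pmf.prob (pair_pmf (cond_pmf H {(a, b). 0 < a \<and> 0 < b})
                                              (cond_pmf H {(a, b). 0 < a \<and> 0 < b})) tied_pairs"
  unfolding tie_prob_11_def tied_pairs_def Let_def ..

lemma measure_concordant_discordant_tied:
  "measure_pmf.prob P concordant_pairs + measure_pmf.prob P discordant_pairs
   + measure_pmf.prob P tied_pairs = 1"
proof -
  have "concordant_pairs \<union> discordant_pairs \<union> tied_pairs = UNIV"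
    by (auto simp: concordant_pairs_def discordant_pairs_def tied_pairs_def)
  then have "measure_pmf.prob P (concordant_pairs \<union> discordant_pairs \<union> tied_pairs) = 1"
    by simp
  then show ?thesis
    by (subst (asm) measure_pmf.finite_measure_Union; subst (asm) measure_pmf.finite_measure_Union)
       (auto simp: concordant_pairs_def discordant_pairs_def tied_pairs_def)
qed

lemma kendall_tau_swap: "kendall_tau (map_pmf prod.swap H) = kendall_tau H"
proof -
  have pair: "pair_pmf (map_pmf prod.swap H) (map_pmf prod.swap H) =
              map_pmf (\<lambda>(x, y). (prod.swap x, prod.swap y)) (pair_pmf H H)"
    by (simp add: map_pair)
  have "(\<lambda>(x, y). (prod.swap x, prod.swap y)) -` concordant_pairs = concordant_pairs"
       "(\<lambda>(x, y). (prod.swap x, prod.swap y)) -` discordant_pairs = discordant_pairs"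
    by (auto simp: concordant_pairs_def discordant_pairs_def mult.commute)
  then show ?thesis
    unfolding kendall_tau_eq_measure pair measure_map_pmf by simp
qed

lemma tie_prob_11_swap:
  assumes "set_pmf H \<inter> {(a, b). 0 < a \<and> 0 < b} \<noteq> {}"
  shows "tie_prob_11 (map_pmf prod.swap H) = tie_prob_11 H"
proof -
  let ?W = "{(a::nat, b::nat). 0 < a \<and> 0 < b}"
  have W: "prod.swap -` ?W = ?W" by auto
  have "cond_pmf (map_pmf prod.swap H) ?W = map_pmf prod.swap (cond_pmf H ?W)"
    using cond_map_pmf[of H prod.swap ?W] assms unfolding W by simp
  moreover have "prod.swap -` tied_pairs = tied_pairs"
    "(\<lambda>(x, y). (prod.swap x, prod.swap y)) -` tied_pairs = tied_pairs"
    by (auto simp: tied_pairs_def)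
  ultimately show ?thesis
    unfolding tie_prob_11_eq_measure by (simp add: map_pair[symmetric] measure_map_pmf)
qed

lemma coupling_marginals:
  assumes "H \<in> couplings F G"
  shows "measure_pmf.prob H {(a, b). int a \<le> s} = F s" "measure_pmf.prob H {(a, b). int b \<le> t} = G t"
  using assms unfolding couplings_def by auto

lemma joint_cdf_le_min:
  assumes "H \<in> couplings F G"
  shows "joint_cdf H x y \<le> min (F x) (G y)"
proof -
  have "joint_cdf H x y \<le> measure_pmf.prob H {(a, b). int a \<le> x}"
       "joint_cdf H x y \<le> measure_pmf.prob H {(a, b). int b \<le> y}"
    unfolding joint_cdf_def by (auto intro!: measure_pmf.finite_measure_mono)
  then show ?thesis using coupling_marginals[OF assms] by simp
qed

lemma max_le_joint_cdf:
  assumes "H \<in> couplings F G"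
  shows "max (F x + G y - 1) 0 \<le> joint_cdf H x y"
proof -
  let ?A = "{(a, b). int a \<le> x}" and ?B = "{(a, b). int b \<le> y}"
  have "?A \<inter> ?B = {(a, b). int a \<le> x \<and> int b \<le> y}" by auto
  then have "measure_pmf.prob H (?A \<union> ?B) = F x + G y - joint_cdf H x y"
    using measure_Un3[of ?A H ?B] coupling_marginals[OF assms]
    unfolding joint_cdf_def by (simp add: measure_pmf.fmeasurable_eq_sets)
  moreover have "measure_pmf.prob H (?A \<union> ?B) \<le> 1" by simp
  ultimately show ?thesis by (simp add: joint_cdf_def)
qed

lemma measure_pair_tied_positive_quadrant:
  assumes "measure_pmf.prob H {(a, b). 0 < a \<and> 0 < b} = w" "0 < w"
  shows "measure_pmf.prob (pair_pmf H H)
           (tied_pairs \<inter> {(a, b). 0 < a \<and> 0 < b} \<times> {(a, b). 0 < a \<and> 0 < b}) = w\<^sup>2 * tie_prob_11 H"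
proof -
  have "measure_pmf.prob H {(a, b). 0 < a \<and> 0 < b} \<noteq> 0"
    using assms by simp
  then have W: "set_pmf H \<inter> {(a, b). 0 < a \<and> 0 < b} \<noteq> {}"
    unfolding measure_pmf_zero_iff .
  have "tie_prob_11 H = measure_pmf.prob (pair_pmf H H)
      (tied_pairs \<inter> {(a, b). 0 < a \<and> 0 < b} \<times> {(a, b). 0 < a \<and> 0 < b}) / (w * w)"
    unfolding tie_prob_11_eq_measure measure_pair_cond_pmf[OF W W] assms(1) by simp
  then show ?thesis
    using assms(2) by (simp add: power2_eq_square)
qed

section \<open>The concordance function\<close>

definition concordance_sign :: "nat \<times> nat \<Rightarrow> nat \<times> nat \<Rightarrow> real" where
  "concordance_sign x y = of_int (sgn (int (fst x) - int (fst y)) * sgn (int (snd x) - int (snd y)))"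

definition concordance :: "(nat \<times> nat) pmf \<Rightarrow> (nat \<times> nat) pmf \<Rightarrow> real" where
  "concordance H K = measure_pmf.expectation (pair_pmf H K) (case_prod concordance_sign)"

lemma abs_concordance_sign_le_1: "\<bar>concordance_sign x y\<bar> \<le> 1"
  by (simp add: concordance_sign_def sgn_if)

lemma kendall_tau_eq_concordance: "kendall_tau H = concordance H H"
proof -
  have "case_prod concordance_sign =
        (\<lambda>z. indicator concordant_pairs z - indicator discordant_pairs z :: real)"
    by (auto simp: fun_eq_iff concordance_sign_def concordant_pairs_def discordant_pairs_def
        indicator_def sgn_if zero_less_mult_iff mult_less_0_iff)
  then show ?thesis
    unfolding kendall_tau_eq_measure concordance_def
    by (simp add: Bochner_Integration.integral_diff measure_pmf.integrable_const_bound[where B=1])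
qed

lemma concordance_commute: "concordance H K = concordance K H"
proof -
  have "concordance H K = measure_pmf.expectation (map_pmf prod.swap (pair_pmf K H)) (case_prod concordance_sign)"
    unfolding concordance_def by (subst pair_commute_pmf) (simp add: prod.swap_def case_prod_beta)
  also have "\<dots> = concordance K H"
    unfolding concordance_def integral_map_pmf
    by (rule Bochner_Integration.integral_cong[OF refl]) (auto simp: concordance_sign_def sgn_if)
  finally show ?thesis .
qed

lemma expectation_concordance_sign:
  assumes "K \<in> couplings F G"
  shows "measure_pmf.expectation K (concordance_sign (a, b)) =
           1 - F (int a - 1) - F (int a) - G (int b - 1) - G (int b)
           + joint_cdf K (int a - 1) (int b - 1) + joint_cdf K (int a - 1) (int b)
           + joint_cdf K (int a) (int b - 1) + joint_cdf K (int a) (int b)"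
proof -
  define iF where "iF s = (indicator {(a', b'). int a' \<le> s} :: nat \<times> nat \<Rightarrow> real)" for s
  define iG where "iG t = (indicator {(a', b'). int b' \<le> t} :: nat \<times> nat \<Rightarrow> real)" for t
  define iJ where "iJ s t = (indicator {(a', b'). int a' \<le> s \<and> int b' \<le> t} :: nat \<times> nat \<Rightarrow> real)" for s t
  have "concordance_sign (a, b) = (\<lambda>y. 1 - iF (int a - 1) y - iF (int a) y - iG (int b - 1) y - iG (int b) y
          + iJ (int a - 1) (int b - 1) y + iJ (int a - 1) (int b) y + iJ (int a) (int b - 1) y
          + iJ (int a) (int b) y)"
    by (auto simp: fun_eq_iff concordance_sign_def iF_def iG_def iJ_def indicator_def sgn_if)
  moreover have "integrable (measure_pmf K) (iF s)" "integrable (measure_pmf K) (iG s)"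
    "integrable (measure_pmf K) (iJ s t)" for s t
    unfolding iF_def iG_def iJ_def by (auto intro!: measure_pmf.integrable_const_bound[where B=1])
  moreover have "measure_pmf.expectation K (iF s) = F s" "measure_pmf.expectation K (iG s) = G s"
    "measure_pmf.expectation K (iJ s t) = joint_cdf K s t" for s t
    using coupling_marginals[OF assms] unfolding iF_def iG_def iJ_def joint_cdf_def by simp_all
  ultimately show ?thesis
    by (simp add: Bochner_Integration.integral_add Bochner_Integration.integral_diff)
qed

lemma abs_expectation_concordance_sign_le_1:
  "\<bar>measure_pmf.expectation K (concordance_sign x)\<bar> \<le> 1"
proof -
  have "\<bar>measure_pmf.expectation K (concordance_sign x)\<bar>
        \<le> measure_pmf.expectation K (\<lambda>y. \<bar>concordance_sign x y\<bar>)"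
    by (rule integral_abs_bound)
  also have "\<dots> \<le> 1"
    by (intro measure_pmf.integral_le_const measure_pmf.integrable_const_bound[where B=1])
       (simp_all add: abs_concordance_sign_le_1)
  finally show ?thesis .
qed

lemma concordance_mono:
  assumes "K \<in> couplings F G" "K' \<in> couplings F G" "\<And>x y. joint_cdf K x y \<le> joint_cdf K' x y"
  shows "concordance H K \<le> concordance H K'"
proof -
  have iterated: "concordance H L = (\<integral>x. measure_pmf.expectation L (concordance_sign x) \<partial>H)" for L
    unfolding concordance_def
    by (subst expectation_pair_pmf[where B=1]) (simp_all add: abs_concordance_sign_le_1 split: prod.split)
  have integrable: "integrable (measure_pmf H) (\<lambda>x. measure_pmf.expectation L (concordance_sign x))" for L
    by (rule measure_pmf.integrable_const_bound[where B=1]) (simp_all add: abs_expectation_concordance_sign_le_1)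
  show ?thesis
    unfolding iterated
  proof (intro integral_mono integrable)
    fix x :: "nat \<times> nat"
    obtain a b where x: "x = (a, b)" by fastforce
    show "measure_pmf.expectation K (concordance_sign x) \<le> measure_pmf.expectation K' (concordance_sign x)"
      unfolding x expectation_concordance_sign[OF assms(1)] expectation_concordance_sign[OF assms(2)]
      using assms(3)[of "int a - 1" "int b - 1"] assms(3)[of "int a - 1" "int b"]
        assms(3)[of "int a" "int b - 1"] assms(3)[of "int a" "int b"]
      by linarith
  qed
qed

lemma kendall_tau_mono:
  assumes "K \<in> couplings F G" "K' \<in> couplings F G" "\<And>x y. joint_cdf K x y \<le> joint_cdf K' x y"
  shows "kendall_tau K \<le> kendall_tau K'"
proof -
  have "concordance K K \<le> concordance K K'" by (rule concordance_mono[OF assms])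
  also have "\<dots> = concordance K' K" by (rule concordance_commute)
  also have "\<dots> \<le> concordance K' K'" by (rule concordance_mono[OF assms])
  finally show ?thesis unfolding kendall_tau_eq_concordance .
qed

lemma measure_pmf_of_joint_cdf:
  fixes M :: "(nat \<times> nat) measure"
  assumes "prob_space M" "sets M = UNIV"
  shows "measure_pmf (pmf_of_joint_cdf (\<lambda>x y. measure M {(a, b). int a \<le> x \<and> int b \<le> y})) = M"
proof -
  interpret prob_space M by fact
  define C where "C x y = measure M {(a, b). int a \<le> x \<and> int b \<le> y}" for x y
  define f where "f = (\<lambda>(a, b). C (int a) (int b) - C (int a - 1) (int b) - C (int a) (int b - 1)
                                  + C (int a - 1) (int b - 1))"
  have f_eq: "f x = measure M {x}" for x
  proof -
    obtain a b where x: "x = (a, b)" by (metis prod.collapse)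
    let ?R = "\<lambda>x y. {(a :: nat, b :: nat). int a \<le> x \<and> int b \<le> y}"
    have "?R (int a) (int b) = {(a, b)} \<union> (?R (int a - 1) (int b) \<union> ?R (int a) (int b - 1))"
      "?R (int a - 1) (int b) \<inter> ?R (int a) (int b - 1) = ?R (int a - 1) (int b - 1)"
      by auto
    then show ?thesis
      using finite_measure_Union[of "{(a, b)}" "?R (int a - 1) (int b) \<union> ?R (int a) (int b - 1)"]
        measure_Un3[of "?R (int a - 1) (int b)" M "?R (int a) (int b - 1)"]
      by (simp add: x f_def C_def assms(2) fmeasurable_eq_sets)
  qed
  have "(\<integral>\<^sup>+x. ennreal (f x) \<partial>count_space UNIV) = (\<integral>\<^sup>+x. emeasure M {x} \<partial>count_space UNIV)"
    by (simp add: f_eq emeasure_eq_measure)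
  also have "\<dots> = emeasure M UNIV"
    by (rule emeasure_countable_singleton[symmetric]) (auto simp: assms(2))
  also have "\<dots> = 1"
    using emeasure_space_1 sets_eq_imp_space_eq[of M "count_space UNIV"] assms(2) by simp
  finally have "(\<integral>\<^sup>+x. ennreal (f x) \<partial>count_space UNIV) = 1" .
  then have "pmf (pmf_of_joint_cdf C) x = measure M {x}" for x
    unfolding pmf_of_joint_cdf_def f_def[symmetric] by (subst pmf_embed_pmf) (simp_all add: f_eq)
  then show ?thesis
    unfolding C_def[symmetric]
    by (intro measure_eqI_countable[where A=UNIV]) (auto simp: assms(2) emeasure_pmf_single emeasure_eq_measure)
qed

lemma measure_pmf_of_joint_cdf_uniform:
  fixes g :: "real \<Rightarrow> nat \<times> nat"
  assumes fibres: "\<And>x. {v \<in> {0<..<1}. g v = x} \<in> sets borel"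
  shows "measure_pmf.prob (pmf_of_joint_cdf (\<lambda>x y. measure lborel
            {v \<in> {0<..<1}. g v \<in> {(a, b). int a \<le> x \<and> int b \<le> y}})) S
         = measure lborel {v \<in> {0<..<1}. g v \<in> S}"
proof -
  let ?U = "restrict_space lborel {0<..<1::real}"
  define M where "M = distr ?U (count_space UNIV) g"
  have g: "g \<in> measurable ?U (count_space UNIV)"
  proof (subst measurable_count_space_eq2_countable, intro conjI ballI)
    fix x
    have "g -` {x} \<inter> space ?U = {v \<in> {0<..<1}. g v = x}" by auto
    then show "g -` {x} \<inter> space ?U \<in> sets ?U"
      using fibres[of x] by (subst sets_restrict_space_iff) auto
  qed simp
  have emeasure_M: "emeasure M S = emeasure lborel {v \<in> {0<..<1}. g v \<in> S}" for S
  proof -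
    have "emeasure M S = emeasure ?U (g -` S \<inter> space ?U)"
      unfolding M_def by (rule emeasure_distr[OF g]) simp
    also have "\<dots> = emeasure lborel (g -` S \<inter> {0<..<1})"
      by (subst emeasure_restrict_space) auto
    also have "g -` S \<inter> {0<..<1} = {v \<in> {0<..<1}. g v \<in> S}" by auto
    finally show ?thesis .
  qed
  have "prob_space M"
  proof (rule prob_spaceI)
    have "{v \<in> {0<..<1::real}. g v \<in> UNIV} = {0<..<1}" by auto
    then show "emeasure M (space M) = 1"
      using emeasure_M[of UNIV] by (simp add: M_def)
  qed
  moreover have "sets M = UNIV" by (simp add: M_def)
  ultimately have "measure_pmf (pmf_of_joint_cdf (\<lambda>x y. measure M {(a, b). int a \<le> x \<and> int b \<le> y})) = M"
    by (rule measure_pmf_of_joint_cdf)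
  then show ?thesis
    by (simp add: measure_def emeasure_M)
qed

lemma set_pmf_imp_two_preimages:
  fixes g :: "real \<Rightarrow> 'a"
  assumes "\<And>A. measure_pmf.prob p A = measure lborel {v \<in> {0<..<1}. g v \<in> A}"
    and "x \<in> set_pmf p"
  obtains v w where "0 < v" "v < w" "w < 1" "g v = x" "g w = x"
proof -
  let ?X = "{v \<in> {0<..<1}. g v = x}"
  have "measure lborel ?X \<noteq> 0"
    using measure_pmf_posI[OF assms(2), of "{x}"] assms(1)[of "{x}"] by simp
  then have "infinite ?X"
    using finite_imp_null_set_lborel measure_eq_0_null_sets by blast
  then have "?X \<noteq> {}"
    by (rule infinite_imp_nonempty)
  then obtain v where "v \<in> ?X"
    by blast
  moreover obtain w where "w \<in> ?X - {v}"
    using infinite_imp_nonempty[OF infinite_remove[OF \<open>infinite ?X\<close>]] by blast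
  ultimately consider "v \<in> ?X" "w \<in> ?X" "v < w" | "w \<in> ?X" "v \<in> ?X" "w < v"
    by (auto simp: neq_iff)
  then show thesis
    using that by cases auto
qed

lemma measure_lborel_between:
  fixes c d :: real
  assumes "c \<le> d" "X \<in> sets borel" "{c<..<d} \<subseteq> X" "X \<subseteq> {c..d}"
  shows "measure lborel X = d - c"
proof -
  have "ennreal (d - c) \<le> emeasure lborel X"
    using emeasure_mono[of "{c<..<d}" X lborel] assms by simp
  moreover have "emeasure lborel X \<le> ennreal (d - c)"
    using emeasure_mono[of X "{c..d}" lborel] assms by simp
  ultimately have "emeasure lborel X = ennreal (d - c)"
    by (rule antisym[rotated])
  then show ?thesis
    using assms(1) by (simp add: measure_def)
qed

section \<open>Quantiles of discrete cdfs\<close>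

locale discrete_cdf =
  fixes F :: "int \<Rightarrow> real"
  assumes zero_on_negatives: "\<And>s. s < 0 \<Longrightarrow> F s = 0"
    and mono: "\<And>s t. s \<le> t \<Longrightarrow> F s \<le> F t"
    and le_one: "\<And>s. F s \<le> 1"
    and approaches_one: "\<And>v. v < 1 \<Longrightarrow> \<exists>n::nat. v < F (int n)"
begin

lemma nonneg: "0 \<le> F s"
  using mono[of "-1" s] zero_on_negatives[of "-1"] zero_on_negatives[of s] by (cases "s < 0") auto

text \<open>For \<open>v \<ge> 1\<close> the set below may be empty and \<open>quantile v\<close> is junk; all lemmas assume \<open>0 < v < 1\<close>.\<close>

definition quantile :: "real \<Rightarrow> nat" where
  "quantile v = (LEAST n. v \<le> F (int n))"

lemma quantile_le_iff:
  assumes "0 < v" "v < 1"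
  shows "int (quantile v) \<le> x \<longleftrightarrow> v \<le> F x"
proof
  obtain n :: nat where n: "v < F (int n)" using approaches_one assms(2) by blast
  have "v \<le> F (int (quantile v))"
    unfolding quantile_def by (rule LeastI[of _ n]) (use n in auto)
  then show "v \<le> F x" if "int (quantile v) \<le> x"
    using mono[OF that] by simp
next
  assume v: "v \<le> F x"
  then have "0 \<le> x" using zero_on_negatives[of x] assms(1) by (cases "x < 0") auto
  then have "v \<le> F (int (nat x))" using v by simp
  then have "quantile v \<le> nat x" unfolding quantile_def by (rule Least_le)
  with \<open>0 \<le> x\<close> show "int (quantile v) \<le> x" by linarith
qed

lemma quantile_simps:
  assumes "0 < v" "v < 1"
  shows "x < int (quantile v) \<longleftrightarrow> F x < v"
    and "int (quantile v) = x \<longleftrightarrow> F (x - 1) < v \<and> v \<le> F x"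
    and "quantile v = 0 \<longleftrightarrow> v \<le> F 0"
    and "0 < quantile v \<longleftrightarrow> F 0 < v"
proof -
  note le_iff = quantile_le_iff[OF assms]
  show "x < int (quantile v) \<longleftrightarrow> F x < v"
    using le_iff[of x] by linarith
  show "int (quantile v) = x \<longleftrightarrow> F (x - 1) < v \<and> v \<le> F x"
    using le_iff[of x] le_iff[of "x - 1"] by linarith
  show "quantile v = 0 \<longleftrightarrow> v \<le> F 0"
    using le_iff[of 0] by linarith
  show "0 < quantile v \<longleftrightarrow> F 0 < v"
    using le_iff[of 0] by linarith
qed

lemma quantile_eq_iff:
  assumes "0 < v" "v < 1"
  shows "quantile v = n \<longleftrightarrow> F (int n - 1) < v \<and> v \<le> F (int n)"
  using quantile_simps(2)[OF assms, of "int n"] by linarith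

end

section \<open>The Frechet-Hoeffding bounds as quantile couplings\<close>

locale discrete_marginals = F: discrete_cdf F + G: discrete_cdf G for F G
begin

definition quantile_pair :: "(real \<Rightarrow> real) \<Rightarrow> real \<Rightarrow> nat \<times> nat" where
  "quantile_pair \<phi> v = (F.quantile v, G.quantile (\<phi> v))"

lemma borel_quantile_pair_preimage:
  assumes [measurable]: "\<phi> \<in> borel_measurable borel"
    and \<phi>: "\<And>v. 0 < v \<Longrightarrow> v < 1 \<Longrightarrow> 0 < \<phi> v \<and> \<phi> v < 1"
  shows "{v \<in> {0<..<1}. quantile_pair \<phi> v \<in> A} \<in> sets borel"
proof -
  have "quantile_pair \<phi> v = (a, b) \<longleftrightarrow>
          F (int a - 1) < v \<and> v \<le> F (int a) \<and> G (int b - 1) < \<phi> v \<and> \<phi> v \<le> G (int b)"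
    if "0 < v" "v < 1" for v a b
    using F.quantile_eq_iff[OF that, of a] G.quantile_eq_iff[of "\<phi> v" b] \<phi>[OF that]
    by (simp add: quantile_pair_def)
  then have "{v \<in> {0<..<1}. quantile_pair \<phi> v = (a, b)} = {v. 0 < v \<and> v < 1 \<and>
          F (int a - 1) < v \<and> v \<le> F (int a) \<and> G (int b - 1) < \<phi> v \<and> \<phi> v \<le> G (int b)}" for a b
    by auto
  then have fibres: "{v \<in> {0<..<1}. quantile_pair \<phi> v = x} \<in> sets borel" for x
    by (cases x) simp
  have "{v \<in> {0<..<1}. quantile_pair \<phi> v \<in> A} = (\<Union>x\<in>A. {v \<in> {0<..<1}. quantile_pair \<phi> v = x})"
    by auto
  then show ?thesis using fibres by auto
qed

lemma measure_pmf_of_quantile_pair: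
  assumes "\<phi> \<in> borel_measurable borel" "\<And>v. 0 < v \<Longrightarrow> v < 1 \<Longrightarrow> 0 < \<phi> v \<and> \<phi> v < 1"
  shows "measure_pmf.prob (pmf_of_joint_cdf (\<lambda>x y. measure lborel
            {v \<in> {0<..<1}. quantile_pair \<phi> v \<in> {(a, b). int a \<le> x \<and> int b \<le> y}})) A
         = measure lborel {v \<in> {0<..<1}. quantile_pair \<phi> v \<in> A}"
  by (rule measure_pmf_of_joint_cdf_uniform)
     (use borel_quantile_pair_preimage[OF assms, of "{x}" for x] in simp)

lemma measure_quantile_pair_between:
  assumes "\<phi> \<in> borel_measurable borel" "\<And>v. 0 < v \<Longrightarrow> v < 1 \<Longrightarrow> 0 < \<phi> v \<and> \<phi> v < 1"
    and "0 \<le> c" "c \<le> d" "d \<le> 1"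
    and "\<And>v. 0 < v \<Longrightarrow> v < 1 \<Longrightarrow> c < v \<Longrightarrow> v < d \<Longrightarrow> quantile_pair \<phi> v \<in> A"
    and "\<And>v. 0 < v \<Longrightarrow> v < 1 \<Longrightarrow> quantile_pair \<phi> v \<in> A \<Longrightarrow> c \<le> v \<and> v \<le> d"
  shows "measure lborel {v \<in> {0<..<1}. quantile_pair \<phi> v \<in> A} = d - c"
  by (rule measure_lborel_between) (use assms borel_quantile_pair_preimage[OF assms(1,2)] in auto)

lemma measure_comonotone_rectangle:
  "measure lborel {v \<in> {0<..<1}. quantile_pair (\<lambda>v. v) v \<in> {(a, b). int a \<le> x \<and> int b \<le> y}}
   = min (F x) (G y)"
  using F.nonneg[of x] G.nonneg[of y] F.le_one[of x]
  by (subst measure_quantile_pair_between[where c=0 and d="min (F x) (G y)"])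
     (auto simp: quantile_pair_def F.quantile_le_iff G.quantile_le_iff)

lemma measure_countermonotone_rectangle:
  "measure lborel {v \<in> {0<..<1}. quantile_pair (\<lambda>v. 1 - v) v \<in> {(a, b). int a \<le> x \<and> int b \<le> y}}
   = max (F x + G y - 1) 0"
proof -
  define R where "R = {(a, b). int a \<le> x \<and> int b \<le> y}"
  have iff: "quantile_pair (\<lambda>v. 1 - v) v \<in> R \<longleftrightarrow> 1 - G y \<le> v \<and> v \<le> F x"
    if "0 < v" "v < 1" for v
    using that F.quantile_le_iff[OF that, of x] G.quantile_le_iff[of "1 - v" y]
    by (auto simp: quantile_pair_def R_def)
  show ?thesis
  proof (cases "1 - G y \<le> F x")
    case True
    have "measure lborel {v \<in> {0<..<1}. quantile_pair (\<lambda>v. 1 - v) v \<in> R} = F x - (1 - G y)"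
      by (rule measure_quantile_pair_between) (use True F.le_one[of x] G.le_one[of y] iff in auto)
    then show ?thesis unfolding R_def[symmetric] using True by simp
  next
    case False
    then have empty: "{v \<in> {0<..<1}. quantile_pair (\<lambda>v. 1 - v) v \<in> R} = {}"
      by (auto simp: iff)
    show ?thesis unfolding R_def[symmetric] empty using False by simp
  qed
qed

lemma measure_FH_upper:
  "measure_pmf.prob (FH_upper F G) A = measure lborel {v \<in> {0<..<1}. quantile_pair (\<lambda>v. v) v \<in> A}"
  unfolding FH_upper_def measure_comonotone_rectangle[symmetric]
  by (rule measure_pmf_of_quantile_pair) auto

lemma measure_FH_lower:
  "measure_pmf.prob (FH_lower F G) A = measure lborel {v \<in> {0<..<1}. quantile_pair (\<lambda>v. 1 - v) v \<in> A}"
  unfolding FH_lower_def measure_countermonotone_rectangle[symmetric]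
  by (rule measure_pmf_of_quantile_pair) auto

lemma joint_cdf_FH_upper: "joint_cdf (FH_upper F G) x y = min (F x) (G y)"
  unfolding joint_cdf_def measure_FH_upper measure_comonotone_rectangle ..

lemma joint_cdf_FH_lower: "joint_cdf (FH_lower F G) x y = max (F x + G y - 1) 0"
  unfolding joint_cdf_def measure_FH_lower measure_countermonotone_rectangle ..

lemma FH_upper_in_couplings: "FH_upper F G \<in> couplings F G"
proof -
  have "measure lborel {v \<in> {0<..<1}. quantile_pair (\<lambda>v. v) v \<in> {(a, b). int a \<le> s}} = F s" for s
    using F.nonneg[of s] F.le_one[of s]
    by (subst measure_quantile_pair_between[where c=0 and d="F s"])
       (auto simp: quantile_pair_def F.quantile_le_iff)
  moreover have "measure lborel {v \<in> {0<..<1}. quantile_pair (\<lambda>v. v) v \<in> {(a, b). int b \<le> t}} = G t" for t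
    using G.nonneg[of t] G.le_one[of t]
    by (subst measure_quantile_pair_between[where c=0 and d="G t"])
       (auto simp: quantile_pair_def G.quantile_le_iff)
  ultimately show ?thesis by (simp add: couplings_def measure_FH_upper)
qed

lemma FH_lower_in_couplings: "FH_lower F G \<in> couplings F G"
proof -
  have G_iff: "int (G.quantile (1 - v)) \<le> t \<longleftrightarrow> 1 - G t \<le> v" if "0 < v" "v < 1" for v t
    using G.quantile_le_iff[of "1 - v" t] that by auto
  have "measure lborel {v \<in> {0<..<1}. quantile_pair (\<lambda>v. 1 - v) v \<in> {(a, b). int a \<le> s}} = F s" for s
    using F.nonneg[of s] F.le_one[of s]
    by (subst measure_quantile_pair_between[where c=0 and d="F s"])
       (auto simp: quantile_pair_def F.quantile_le_iff)
  moreover have "measure lborel {v \<in> {0<..<1}. quantile_pair (\<lambda>v. 1 - v) v \<in> {(a, b). int b \<le> t}} = G t" for t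
    using G.nonneg[of t] G.le_one[of t]
    by (subst measure_quantile_pair_between[where c="1 - G t" and d=1])
       (auto simp: quantile_pair_def G_iff)
  ultimately show ?thesis by (simp add: couplings_def measure_FH_lower)
qed

lemma SUP_kendall_tau_couplings: "(SUP H\<in>couplings F G. kendall_tau H) = kendall_tau (FH_upper F G)"
proof (rule cSup_eq_maximum)
  show "kendall_tau (FH_upper F G) \<in> kendall_tau ` couplings F G"
    using FH_upper_in_couplings by blast
  show "t \<le> kendall_tau (FH_upper F G)" if "t \<in> kendall_tau ` couplings F G" for t
    using that kendall_tau_mono[OF _ FH_upper_in_couplings] joint_cdf_le_min
    by (auto simp: joint_cdf_FH_upper)
qed

lemma INF_kendall_tau_couplings: "(INF H\<in>couplings F G. kendall_tau H) = kendall_tau (FH_lower F G)"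
proof (rule cInf_eq_minimum)
  show "kendall_tau (FH_lower F G) \<in> kendall_tau ` couplings F G"
    using FH_lower_in_couplings by blast
  show "kendall_tau (FH_lower F G) \<le> t" if "t \<in> kendall_tau ` couplings F G" for t
    using that kendall_tau_mono[OF FH_lower_in_couplings] max_le_joint_cdf
    by (auto simp: joint_cdf_FH_lower)
qed

lemma measure_FH_upper_between:
  assumes "0 \<le> c" "c \<le> d" "d \<le> 1"
    and "\<And>v. 0 < v \<Longrightarrow> v < 1 \<Longrightarrow> c < v \<Longrightarrow> v < d \<Longrightarrow> (F.quantile v, G.quantile v) \<in> A"
    and "\<And>v. 0 < v \<Longrightarrow> v < 1 \<Longrightarrow> (F.quantile v, G.quantile v) \<in> A \<Longrightarrow> c \<le> v \<and> v \<le> d"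
  shows "measure_pmf.prob (FH_upper F G) A = d - c"
  unfolding measure_FH_upper
  by (rule measure_quantile_pair_between) (use assms in \<open>auto simp: quantile_pair_def\<close>)

lemma measure_FH_lower_between:
  assumes "0 \<le> c" "c \<le> d" "d \<le> 1"
    and "\<And>v. 0 < v \<Longrightarrow> v < 1 \<Longrightarrow> c < v \<Longrightarrow> v < d \<Longrightarrow> (F.quantile v, G.quantile (1 - v)) \<in> A"
    and "\<And>v. 0 < v \<Longrightarrow> v < 1 \<Longrightarrow> (F.quantile v, G.quantile (1 - v)) \<in> A \<Longrightarrow> c \<le> v \<and> v \<le> d"
  shows "measure_pmf.prob (FH_lower F G) A = d - c"
  unfolding measure_FH_lower
  by (rule measure_quantile_pair_between) (use assms in \<open>auto simp: quantile_pair_def\<close>)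

section \<open>Kendall's tau of the Frechet-Hoeffding bounds\<close>

lemma set_pmf_FH_upperD:
  assumes "x \<in> set_pmf (FH_upper F G)"
  shows "int (fst x) \<le> i \<Longrightarrow> j < int (snd x) \<Longrightarrow> G j < F i"
    and "i < int (fst x) \<Longrightarrow> int (snd x) \<le> j \<Longrightarrow> F i < G j"
proof -
  obtain v w where v: "0 < v" "v < w" "w < 1" "quantile_pair (\<lambda>v. v) v = x"
    by (rule set_pmf_imp_two_preimages[OF measure_FH_upper assms])
  have "int (fst x) \<le> i \<longleftrightarrow> v \<le> F i" "int (snd x) \<le> j \<longleftrightarrow> v \<le> G j"
    using v F.quantile_le_iff[of v i] G.quantile_le_iff[of v j] by (auto simp: quantile_pair_def)
  then show "int (fst x) \<le> i \<Longrightarrow> j < int (snd x) \<Longrightarrow> G j < F i"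
       "i < int (fst x) \<Longrightarrow> int (snd x) \<le> j \<Longrightarrow> F i < G j"
    by linarith+
qed

text \<open>Two preimages give the strict inequality in the first claim. It is needed when
  \<open>F i + G j = 1\<close>, since the hypotheses on \<open>s~'\<close> and \<open>t~'\<close> in the theorem are not strict.\<close>

lemma set_pmf_FH_lowerD:
  assumes "x \<in> set_pmf (FH_lower F G)"
  shows "int (fst x) \<le> i \<Longrightarrow> int (snd x) \<le> j \<Longrightarrow> 1 < F i + G j"
    and "i < int (fst x) \<Longrightarrow> j < int (snd x) \<Longrightarrow> F i + G j < 1"
proof -
  obtain v w where vw: "0 < v" "v < w" "w < 1" "quantile_pair (\<lambda>v. 1 - v) v = x"
    "quantile_pair (\<lambda>v. 1 - v) w = x"
    by (rule set_pmf_imp_two_preimages[OF measure_FH_lower assms])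
  have "int (fst x) \<le> i \<longleftrightarrow> w \<le> F i" "int (snd x) \<le> j \<longleftrightarrow> 1 - v \<le> G j"
    "int (fst x) \<le> i \<longleftrightarrow> v \<le> F i" "int (snd x) \<le> j \<longleftrightarrow> 1 - w \<le> G j"
    using vw F.quantile_le_iff[of w i] G.quantile_le_iff[of "1 - v" j]
      F.quantile_le_iff[of v i] G.quantile_le_iff[of "1 - w" j]
    by (auto simp: quantile_pair_def)
  then show "int (fst x) \<le> i \<Longrightarrow> int (snd x) \<le> j \<Longrightarrow> 1 < F i + G j"
    "i < int (fst x) \<Longrightarrow> j < int (snd x) \<Longrightarrow> F i + G j < 1"
    using vw(2) by linarith+
qed

lemma kendall_tau_FH_upper_eq_ties:
  "kendall_tau (FH_upper F G) =
     1 - measure_pmf.prob (pair_pmf (FH_upper F G) (FH_upper F G)) tied_pairs"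
proof -
  let ?P = "pair_pmf (FH_upper F G) (FH_upper F G)"
  have "((a, b), (a', b')) \<notin> discordant_pairs"
    if x: "(a, b) \<in> set_pmf (FH_upper F G)" and y: "(a', b') \<in> set_pmf (FH_upper F G)" for a b a' b'
  proof
    assume "((a, b), (a', b')) \<in> discordant_pairs"
    then have "a < a' \<and> b' < b \<or> a' < a \<and> b < b'"
      by (auto simp: discordant_pairs_def mult_less_0_iff)
    then show False
      using set_pmf_FH_upperD[OF x, of "int a" "int b'"] set_pmf_FH_upperD[OF y, of "int a" "int b'"]
        set_pmf_FH_upperD[OF x, of "int a'" "int b"] set_pmf_FH_upperD[OF y, of "int a'" "int b"]
      by auto
  qed
  then have "measure_pmf.prob ?P discordant_pairs = 0"
    by (auto simp: measure_pmf_zero_iff)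
  then show ?thesis
    using measure_concordant_discordant_tied[of ?P] by (simp add: kendall_tau_eq_measure)
qed

lemma measure_concordant_FH_lower:
  "measure_pmf.prob (pair_pmf (FH_lower F G) (FH_lower F G)) concordant_pairs = 0"
proof -
  have "((a, b), (a', b')) \<notin> concordant_pairs"
    if x: "(a, b) \<in> set_pmf (FH_lower F G)" and y: "(a', b') \<in> set_pmf (FH_lower F G)" for a b a' b'
  proof
    assume "((a, b), (a', b')) \<in> concordant_pairs"
    then have "a < a' \<and> b < b' \<or> a' < a \<and> b' < b"
      by (auto simp: concordant_pairs_def zero_less_mult_iff)
    then show False
      using set_pmf_FH_lowerD[OF x, of "int a" "int b"] set_pmf_FH_lowerD[OF y, of "int a" "int b"]
        set_pmf_FH_lowerD[OF x, of "int a'" "int b'"] set_pmf_FH_lowerD[OF y, of "int a'" "int b'"]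
      by auto
  qed
  then show ?thesis
    by (auto simp: measure_pmf_zero_iff)
qed

lemma kendall_tau_FH_upper:
  assumes F0: "F 0 \<le> G 0" and s: "G 0 < F s" "F (s - 1) \<le> G 0"
  shows "kendall_tau (FH_upper F G) = (1 - (G 0)\<^sup>2) - (1 - G 0)\<^sup>2 * tie_prob_11 (FH_upper F G)
           - 2 * (G 0 - F (s - 1)) * (F s - G 0)"
proof -
  let ?H = "FH_upper F G"
  let ?P = "pair_pmf ?H ?H"
  define Z where "Z = {(a :: nat, b :: nat). b = 0}"
  define W where "W = {(a :: nat, b :: nat). 0 < a \<and> 0 < b}"
  define S where "S = {(a :: nat, b :: nat). int a = s}"
  have cover: "set_pmf ?H \<subseteq> Z \<union> W"
    using set_pmf_FH_upperD(1)[of _ 0 0] F0 by (fastforce simp: Z_def W_def)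
  have Z_fst: "int (fst x) \<le> s" if "x \<in> set_pmf ?H" "x \<in> Z" for x
    using set_pmf_FH_upperD(2)[OF that(1), of s 0] that(2) s by (force simp: Z_def)
  have W_fst: "s \<le> int (fst x)" if "x \<in> set_pmf ?H" "x \<in> W" for x
    using set_pmf_FH_upperD(1)[OF that(1), of "s - 1" 0] that(2) s by (force simp: W_def)
  have pW: "measure_pmf.prob ?H W = 1 - G 0"
    using F0 G.nonneg[of 0] G.le_one[of 0]
    by (intro measure_FH_upper_between) (auto simp: W_def F.quantile_simps G.quantile_simps)
  have "Z \<noteq> W" "Z \<inter> W = {}" "W \<inter> Z = {}" by (auto simp: Z_def W_def)
  then have "measure_pmf.prob ?P tied_pairs =
      measure_pmf.prob ?P (tied_pairs \<inter> Z \<times> Z) + measure_pmf.prob ?P (tied_pairs \<inter> Z \<times> W)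
    + measure_pmf.prob ?P (tied_pairs \<inter> W \<times> Z) + measure_pmf.prob ?P (tied_pairs \<inter> W \<times> W)"
    using measure_pair_pmf_blocks[of "{Z, W}" ?H ?H tied_pairs] cover
    by (simp add: disjoint_def add.assoc)
  also have "measure_pmf.prob ?P (tied_pairs \<inter> Z \<times> Z) = measure_pmf.prob ?H Z * measure_pmf.prob ?H Z"
    by (rule measure_pair_pmf_eq_times_on_support) (auto simp: tied_pairs_def Z_def)
  \<comment> \<open>Across \<open>Z\<close> and \<open>W\<close> the second coordinates differ, so a tie needs equal first
      coordinates, which \<open>Z_fst\<close> and \<open>W_fst\<close> force to be \<open>s\<close>.\<close>
  also have "measure_pmf.prob ?P (tied_pairs \<inter> Z \<times> W) =
             measure_pmf.prob ?H (Z \<inter> S) * measure_pmf.prob ?H (W \<inter> S)"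
    by (rule measure_pair_pmf_eq_times_on_support)
       (use Z_fst W_fst in \<open>fastforce simp: tied_pairs_def Z_def W_def S_def\<close>)
  also have "measure_pmf.prob ?P (tied_pairs \<inter> W \<times> Z) =
             measure_pmf.prob ?H (W \<inter> S) * measure_pmf.prob ?H (Z \<inter> S)"
    by (rule measure_pair_pmf_eq_times_on_support)
       (use Z_fst W_fst in \<open>fastforce simp: tied_pairs_def Z_def W_def S_def\<close>)
  also have "measure_pmf.prob ?H Z = G 0"
    using G.nonneg[of 0] G.le_one[of 0]
    by (subst measure_FH_upper_between[where c=0 and d="G 0"]) (auto simp: Z_def G.quantile_simps)
  also have "measure_pmf.prob ?H (Z \<inter> S) = G 0 - F (s - 1)"
    using s F.nonneg[of "s - 1"] G.le_one[of 0]
    by (intro measure_FH_upper_between) (auto simp: Z_def S_def F.quantile_simps G.quantile_simps)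
  also have "measure_pmf.prob ?H (W \<inter> S) = F s - G 0"
    using F0 s F.le_one[of s] G.nonneg[of 0]
    by (intro measure_FH_upper_between) (auto simp: W_def S_def F.quantile_simps G.quantile_simps)
  also have "measure_pmf.prob ?P (tied_pairs \<inter> W \<times> W) = (1 - G 0)\<^sup>2 * tie_prob_11 ?H"
    using s F.le_one[of s] unfolding W_def
    by (intro measure_pair_tied_positive_quadrant pW[unfolded W_def]) simp
  finally show ?thesis
    unfolding kendall_tau_FH_upper_eq_ties by (simp add: power2_eq_square algebra_simps)
qed

lemma kendall_tau_FH_lower_eq_ties:
  "kendall_tau (FH_lower F G) =
     measure_pmf.prob (pair_pmf (FH_lower F G) (FH_lower F G)) tied_pairs - 1"
  using measure_concordant_discordant_tied[of "pair_pmf (FH_lower F G) (FH_lower F G)"]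
    measure_concordant_FH_lower by (simp add: kendall_tau_eq_measure)

lemma kendall_tau_FH_lower_overlap:
  assumes "1 - F 0 - G 0 < 0"
  shows "kendall_tau (FH_lower F G) = - 2 * (1 - F 0) * (1 - G 0)"
proof -
  let ?H = "FH_lower F G"
  let ?P = "pair_pmf ?H ?H"
  define X0 where "X0 = {(a :: nat, b :: nat). a = 0}"
  define Y0 where "Y0 = {(a :: nat, b :: nat). 0 < a \<and> b = 0}"
  define N where "N = {(a :: nat, b :: nat). a = 0 \<and> 0 < b}"
  have cover: "set_pmf ?H \<subseteq> X0 \<union> Y0"
    using set_pmf_FH_lowerD(2)[of _ 0 0] assms by (fastforce simp: X0_def Y0_def)
  have "X0 \<noteq> Y0" "X0 \<inter> Y0 = {}" "Y0 \<inter> X0 = {}" by (auto simp: X0_def Y0_def)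
  then have "measure_pmf.prob ?P discordant_pairs =
      measure_pmf.prob ?P (discordant_pairs \<inter> X0 \<times> X0) + measure_pmf.prob ?P (discordant_pairs \<inter> X0 \<times> Y0)
    + measure_pmf.prob ?P (discordant_pairs \<inter> Y0 \<times> X0) + measure_pmf.prob ?P (discordant_pairs \<inter> Y0 \<times> Y0)"
    using measure_pair_pmf_blocks[of "{X0, Y0}" ?H ?H discordant_pairs] cover
    by (simp add: disjoint_def add.assoc)
  also have "discordant_pairs \<inter> X0 \<times> X0 = {}"
    by (auto simp: discordant_pairs_def X0_def)
  also have "discordant_pairs \<inter> Y0 \<times> Y0 = {}"
    by (auto simp: discordant_pairs_def Y0_def)
  also have "measure_pmf.prob ?P (discordant_pairs \<inter> X0 \<times> Y0) = measure_pmf.prob ?H N * measure_pmf.prob ?H Y0"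
    by (rule measure_pair_pmf_eq_times_on_support)
       (auto simp: discordant_pairs_def X0_def Y0_def N_def zero_less_mult_iff)
  also have "measure_pmf.prob ?P (discordant_pairs \<inter> Y0 \<times> X0) = measure_pmf.prob ?H Y0 * measure_pmf.prob ?H N"
    by (rule measure_pair_pmf_eq_times_on_support)
       (auto simp: discordant_pairs_def X0_def Y0_def N_def zero_less_mult_iff)
  also have "measure_pmf.prob ?H N = 1 - G 0"
    using assms F.le_one[of 0] G.le_one[of 0]
    by (subst measure_FH_lower_between[where c=0 and d="1 - G 0"])
       (auto simp: N_def F.quantile_simps G.quantile_simps)
  also have "measure_pmf.prob ?H Y0 = 1 - F 0"
    using assms F.le_one[of 0] G.le_one[of 0]
    by (intro measure_FH_lower_between) (auto simp: Y0_def F.quantile_simps G.quantile_simps)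
  finally show ?thesis
    using measure_concordant_FH_lower by (simp add: kendall_tau_eq_measure algebra_simps)
qed

lemma measure_tied_FH_lower:
  assumes gap: "0 < 1 - F 0 - G 0"
    and s: "0 < F s + G 0 - 1" "F (s - 1) + G 0 - 1 \<le> 0"
    and t: "0 < G t + F 0 - 1" "G (t - 1) + F 0 - 1 \<le> 0"
  defines "X0 \<equiv> {(a, b). a = 0}" and "Y0 \<equiv> {(a, b). 0 < a \<and> b = 0}"
    and "W \<equiv> {(a, b). 0 < a \<and> 0 < b}"
    and "S \<equiv> {(a, b). int a = s}" and "T \<equiv> {(a, b). int b = t}"
  shows "measure_pmf.prob (pair_pmf (FH_lower F G) (FH_lower F G)) tied_pairs =
           (measure_pmf.prob (FH_lower F G) X0)\<^sup>2 + (measure_pmf.prob (FH_lower F G) Y0)\<^sup>2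
           + 2 * (measure_pmf.prob (FH_lower F G) (X0 \<inter> T) * measure_pmf.prob (FH_lower F G) (W \<inter> T))
           + 2 * (measure_pmf.prob (FH_lower F G) (Y0 \<inter> S) * measure_pmf.prob (FH_lower F G) (W \<inter> S))
           + measure_pmf.prob (pair_pmf (FH_lower F G) (FH_lower F G)) (tied_pairs \<inter> W \<times> W)"
proof -
  let ?H = "FH_lower F G"
  let ?P = "pair_pmf ?H ?H"
  have X0_snd: "0 < snd x" "t \<le> int (snd x)" if "x \<in> set_pmf ?H" "x \<in> X0" for x
    using set_pmf_FH_lowerD(1)[OF that(1), of 0 0] set_pmf_FH_lowerD(1)[OF that(1), of 0 "t - 1"]
      that(2) gap t by (force simp: X0_def)+
  have Y0_fst: "s \<le> int (fst x)" if "x \<in> set_pmf ?H" "x \<in> Y0" for x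
    using set_pmf_FH_lowerD(1)[OF that(1), of "s - 1" 0] that(2) s by (force simp: Y0_def)
  have W_le: "int (fst x) \<le> s" "int (snd x) \<le> t" if "x \<in> set_pmf ?H" "x \<in> W" for x
    using set_pmf_FH_lowerD(2)[OF that(1), of s 0] set_pmf_FH_lowerD(2)[OF that(1), of 0 t]
      that(2) s t by (force simp: W_def)+
  have cover: "X0 \<union> (Y0 \<union> W) = UNIV"
    by (auto simp: X0_def Y0_def W_def)
  have "X0 \<noteq> Y0" "X0 \<noteq> W" "Y0 \<noteq> W" "X0 \<inter> Y0 = {}" "X0 \<inter> W = {}" "Y0 \<inter> W = {}"
    "Y0 \<inter> X0 = {}" "W \<inter> X0 = {}" "W \<inter> Y0 = {}"
    by (auto simp: X0_def Y0_def W_def)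
  then have "measure_pmf.prob ?P tied_pairs =
      measure_pmf.prob ?P (tied_pairs \<inter> X0 \<times> X0) + measure_pmf.prob ?P (tied_pairs \<inter> X0 \<times> Y0)
    + measure_pmf.prob ?P (tied_pairs \<inter> X0 \<times> W) + measure_pmf.prob ?P (tied_pairs \<inter> Y0 \<times> X0)
    + measure_pmf.prob ?P (tied_pairs \<inter> Y0 \<times> Y0) + measure_pmf.prob ?P (tied_pairs \<inter> Y0 \<times> W)
    + measure_pmf.prob ?P (tied_pairs \<inter> W \<times> X0) + measure_pmf.prob ?P (tied_pairs \<inter> W \<times> Y0)
    + measure_pmf.prob ?P (tied_pairs \<inter> W \<times> W)"
    using measure_pair_pmf_blocks[of "{X0, Y0, W}" ?H ?H tied_pairs] cover
    by (simp add: disjoint_def add.assoc)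
  also have "measure_pmf.prob ?P (tied_pairs \<inter> X0 \<times> X0) = measure_pmf.prob ?H X0 * measure_pmf.prob ?H X0"
    by (rule measure_pair_pmf_eq_times_on_support) (auto simp: tied_pairs_def X0_def)
  also have "measure_pmf.prob ?P (tied_pairs \<inter> Y0 \<times> Y0) = measure_pmf.prob ?H Y0 * measure_pmf.prob ?H Y0"
    by (rule measure_pair_pmf_eq_times_on_support) (auto simp: tied_pairs_def Y0_def)
  also have "measure_pmf.prob ?P (tied_pairs \<inter> X0 \<times> Y0) = 0"
    unfolding measure_pmf_zero_iff using X0_snd by (fastforce simp: tied_pairs_def X0_def Y0_def)
  also have "measure_pmf.prob ?P (tied_pairs \<inter> Y0 \<times> X0) = 0"
    unfolding measure_pmf_zero_iff using X0_snd by (fastforce simp: tied_pairs_def X0_def Y0_def)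
  also have "measure_pmf.prob ?P (tied_pairs \<inter> X0 \<times> W) =
             measure_pmf.prob ?H (X0 \<inter> T) * measure_pmf.prob ?H (W \<inter> T)"
    by (rule measure_pair_pmf_eq_times_on_support)
       (use X0_snd W_le in \<open>fastforce simp: tied_pairs_def X0_def W_def T_def\<close>)
  also have "measure_pmf.prob ?P (tied_pairs \<inter> W \<times> X0) =
             measure_pmf.prob ?H (W \<inter> T) * measure_pmf.prob ?H (X0 \<inter> T)"
    by (rule measure_pair_pmf_eq_times_on_support)
       (use X0_snd W_le in \<open>fastforce simp: tied_pairs_def X0_def W_def T_def\<close>)
  also have "measure_pmf.prob ?P (tied_pairs \<inter> Y0 \<times> W) =
             measure_pmf.prob ?H (Y0 \<inter> S) * measure_pmf.prob ?H (W \<inter> S)"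
    by (rule measure_pair_pmf_eq_times_on_support)
       (use Y0_fst W_le in \<open>fastforce simp: tied_pairs_def Y0_def W_def S_def\<close>)
  also have "measure_pmf.prob ?P (tied_pairs \<inter> W \<times> Y0) =
             measure_pmf.prob ?H (W \<inter> S) * measure_pmf.prob ?H (Y0 \<inter> S)"
    by (rule measure_pair_pmf_eq_times_on_support)
       (use Y0_fst W_le in \<open>fastforce simp: tied_pairs_def Y0_def W_def S_def\<close>)
  finally show ?thesis by (simp add: power2_eq_square)
qed

lemma kendall_tau_FH_lower:
  assumes gap: "0 < 1 - F 0 - G 0"
    and s: "0 < F s + G 0 - 1" "F (s - 1) + G 0 - 1 \<le> 0"
    and t: "0 < G t + F 0 - 1" "G (t - 1) + F 0 - 1 \<le> 0"
  shows "kendall_tau (FH_lower F G) = (F 0)\<^sup>2 + (G 0)\<^sup>2 - 1 + (1 - F 0 - G 0)\<^sup>2 * tie_prob_11 (FH_lower F G)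
           + 2 * ((F s + G 0 - 1) * (1 - G 0 - F (s - 1)) + (G t + F 0 - 1) * (1 - F 0 - G (t - 1)))"
proof -
  let ?H = "FH_lower F G"
  have "F 0 \<le> F (s - 1)" "G 0 \<le> G (t - 1)"
    using F.mono[of s 0] G.mono[of t 0] F.mono[of 0 "s - 1"] G.mono[of 0 "t - 1"] s t gap
    by (cases "0 < s"; cases "0 < t"; simp)+
  note bounds = this F.le_one[of s] G.le_one[of t] F.nonneg[of 0] G.nonneg[of 0] gap s t
  have pX0: "measure_pmf.prob ?H {(a, b). a = 0} = F 0"
    using bounds
    by (subst measure_FH_lower_between[where c=0 and d="F 0"]) (auto simp: F.quantile_simps)
  have pY0: "measure_pmf.prob ?H {(a, b). 0 < a \<and> b = 0} = G 0"
    using bounds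
    by (subst measure_FH_lower_between[where c="1 - G 0" and d=1])
       (auto simp: F.quantile_simps G.quantile_simps)
  have pW: "measure_pmf.prob ?H {(a, b). 0 < a \<and> 0 < b} = 1 - F 0 - G 0"
    using bounds
    by (subst measure_FH_lower_between[where c="F 0" and d="1 - G 0"])
       (auto simp: F.quantile_simps G.quantile_simps)
  have pXT: "measure_pmf.prob ?H ({(a, b). a = 0} \<inter> {(a, b). int b = t}) = G t + F 0 - 1"
    using bounds
    by (subst measure_FH_lower_between[where c="1 - G t" and d="F 0"])
       (auto simp: F.quantile_simps G.quantile_simps)
  have pWT: "measure_pmf.prob ?H ({(a, b). 0 < a \<and> 0 < b} \<inter> {(a, b). int b = t})
                 = 1 - F 0 - G (t - 1)"
    using bounds
    by (subst measure_FH_lower_between[where c="F 0" and d="1 - G (t - 1)"])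
       (auto simp: F.quantile_simps G.quantile_simps)
  have pYS: "measure_pmf.prob ?H ({(a, b). 0 < a \<and> b = 0} \<inter> {(a, b). int a = s}) = F s + G 0 - 1"
    using bounds
    by (subst measure_FH_lower_between[where c="1 - G 0" and d="F s"])
       (auto simp: F.quantile_simps G.quantile_simps)
  have pWS: "measure_pmf.prob ?H ({(a, b). 0 < a \<and> 0 < b} \<inter> {(a, b). int a = s})
                 = 1 - G 0 - F (s - 1)"
    using bounds
    by (subst measure_FH_lower_between[where c="F (s - 1)" and d="1 - G 0"])
       (auto simp: F.quantile_simps G.quantile_simps)
  show ?thesis
    unfolding kendall_tau_FH_lower_eq_ties measure_tied_FH_lower[OF gap s t]
      pX0 pY0 pXT pWT pYS pWS measure_pair_tied_positive_quadrant[OF pW gap]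
    by (simp add: power2_eq_square algebra_simps)
qed

lemma FH_upper_swap: "FH_upper G F = map_pmf prod.swap (FH_upper F G)"
proof -
  interpret GF: discrete_marginals G F
    by (simp add: discrete_marginals_def F.discrete_cdf_axioms G.discrete_cdf_axioms)
  show ?thesis
  proof (rule pmf_eqI)
    fix x :: "nat \<times> nat"
    have "{v \<in> {0<..<1}. GF.quantile_pair (\<lambda>v. v) v \<in> {x}} =
          {v \<in> {0<..<1}. quantile_pair (\<lambda>v. v) v \<in> prod.swap -` {x}}"
      by (auto simp: quantile_pair_def GF.quantile_pair_def)
    then show "pmf (FH_upper G F) x = pmf (map_pmf prod.swap (FH_upper F G)) x"
      by (simp only: measure_pmf_single[symmetric] measure_map_pmf GF.measure_FH_upper measure_FH_upper)
  qed
qed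

lemma kendall_tau_FH_upper_swapped:
  assumes G0: "G 0 \<le> F 0" and t: "F 0 < G t" "G (t - 1) \<le> F 0"
  shows "kendall_tau (FH_upper F G) = (1 - (F 0)\<^sup>2) - (1 - F 0)\<^sup>2 * tie_prob_11 (FH_upper F G)
           - 2 * (F 0 - G (t - 1)) * (G t - F 0)"
proof -
  interpret GF: discrete_marginals G F
    by (simp add: discrete_marginals_def F.discrete_cdf_axioms G.discrete_cdf_axioms)
  have "measure_pmf.prob (FH_upper F G) {(a, b). 0 < a \<and> 0 < b} = 1 - F 0"
    using G0 t F.nonneg[of 0] G.le_one[of t]
    by (intro measure_FH_upper_between) (auto simp: F.quantile_simps G.quantile_simps)
  then have "set_pmf (FH_upper F G) \<inter> {(a, b). 0 < a \<and> 0 < b} \<noteq> {}"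
    using t G.le_one[of t] by (auto simp: measure_pmf_zero_iff[symmetric])
  then show ?thesis
    using GF.kendall_tau_FH_upper[OF assms]
    by (simp add: FH_upper_swap kendall_tau_swap tie_prob_11_swap)
qed

end

lemma discrete_cdf_zero_inflated:
  fixes piF :: real and PF :: "nat pmf" and F :: "int \<Rightarrow> real"
  assumes piF: "0 \<le> piF" "piF \<le> 1"
    and F_def: "\<And>s. F s = (if s < 0 then 0 else (1 - piF) + piF * nat_cdf PF s)"
  shows "discrete_cdf F"
proof
  have cdf_01: "0 \<le> nat_cdf PF s" "nat_cdf PF s \<le> 1" for s by (auto simp: nat_cdf_def)
  have cdf_mono: "nat_cdf PF s \<le> nat_cdf PF t" if "s \<le> t" for s t
    unfolding nat_cdf_def by (rule measure_pmf.finite_measure_mono) (use that in auto)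
  show "F s = 0" if "s < 0" for s using that by (simp add: F_def)
  show "F s \<le> F t" if "s \<le> t" for s t
  proof (cases "s < 0")
    case True
    have "0 \<le> (1 - piF) + piF * nat_cdf PF t" using cdf_01[of t] piF by simp
    then show ?thesis using True by (simp add: F_def)
  next
    case False
    then show ?thesis
      using that cdf_mono[OF that] piF by (simp add: F_def mult_left_mono)
  qed
  show "F s \<le> 1" for s
    using cdf_01[of s] piF mult_left_mono[of "nat_cdf PF s" 1 piF] by (simp add: F_def)
  show "\<exists>n::nat. v < F (int n)" if "v < 1" for v
  proof -
    have "(\<lambda>n. measure_pmf.prob PF {..n}) \<longlonglongrightarrow> measure_pmf.prob PF (\<Union>n. {..n})"
      by (rule measure_pmf.finite_Lim_measure_incseq) (auto simp: incseq_def)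
    moreover have "(\<Union>n. {..n::nat}) = UNIV" by auto
    moreover have "nat_cdf PF (int n) = measure_pmf.prob PF {..n}" for n
      unfolding nat_cdf_def by (rule arg_cong[where f="measure_pmf.prob PF"]) auto
    ultimately have "(\<lambda>n. nat_cdf PF (int n)) \<longlonglongrightarrow> 1" by simp
    then have "(\<lambda>n. (1 - piF) + piF * nat_cdf PF (int n)) \<longlonglongrightarrow> (1 - piF) + piF * 1"
      by (intro tendsto_intros)
    then have "(\<lambda>n. F (int n)) \<longlonglongrightarrow> 1" by (simp add: F_def)
    from order_tendstoD(1)[OF this that] obtain N where "\<forall>n\<ge>N. v < F (int n)"
      by (auto simp: eventually_sequentially)
    then show ?thesis by blast
  qed
qed

theorem proposition1:
  fixes piF piG :: real and PF PG :: "nat pmf" and F G :: "int \<Rightarrow> real" and p1 p2 :: real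
  assumes piF: "0 \<le> piF" "piF \<le> 1" and piG: "0 \<le> piG" "piG \<le> 1"
    and F_def: "\<And>s. F s = (if s < 0 then 0 else (1 - piF) + piF * nat_cdf PF s)"
    and G_def: "\<And>t. G t = (if t < 0 then 0 else (1 - piG) + piG * nat_cdf PG t)"
    and p1_def: "p1 = F 0" and p2_def: "p2 = G 0"
  shows
    "(p1 \<le> p2 \<longrightarrow> (\<forall>s. F s > p2 \<and> F (s - 1) \<le> p2 \<longrightarrow>
        (SUP H\<in>couplings F G. kendall_tau H) =
          (1 - p2^2) - (1 - p2)^2 * tie_prob_11 (FH_upper F G)
          - 2 * (p2 - F (s - 1)) * (F s - p2)))
   \<and> (p1 \<ge> p2 \<longrightarrow> (\<forall>t. G t > p1 \<and> G (t - 1) \<le> p1 \<longrightarrow>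
        (SUP H\<in>couplings F G. kendall_tau H) =
          (1 - p1^2) - (1 - p1)^2 * tie_prob_11 (FH_upper F G)
          - 2 * (p1 - G (t - 1)) * (G t - p1)))
   \<and> (1 - p1 - p2 < 0 \<longrightarrow>
        (INF H\<in>couplings F G. kendall_tau H) = - 2 * (1 - p1) * (1 - p2))
   \<and> (1 - p1 - p2 > 0 \<longrightarrow> (\<forall>s' t'.
        F s' + p2 - 1 > 0 \<and> F (s' - 1) + p2 - 1 \<le> 0 \<and>
        G t' + p1 - 1 > 0 \<and> G (t' - 1) + p1 - 1 \<le> 0 \<longrightarrow>
        (INF H\<in>couplings F G. kendall_tau H) =
          p1^2 + p2^2 - 1 + (1 - p1 - p2)^2 * tie_prob_11 (FH_lower F G)
          + 2 * ((F s' + p2 - 1) * (1 - p2 - F (s' - 1))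
                 + (G t' + p1 - 1) * (1 - p1 - G (t' - 1)))))"
proof -
  interpret discrete_marginals F G
    unfolding discrete_marginals_def
    using discrete_cdf_zero_inflated[OF piF F_def] discrete_cdf_zero_inflated[OF piG G_def] ..
  show ?thesis
    unfolding p1_def p2_def SUP_kendall_tau_couplings INF_kendall_tau_couplings
    using kendall_tau_FH_upper kendall_tau_FH_upper_swapped kendall_tau_FH_lower_overlap
      kendall_tau_FH_lower
    by auto
qed

end
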